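(* Let $k\ge1$ and let $\hat\theta_1,\dots,\hat\theta_k\in\mathbb R$ with $e^{i\hat\theta_1},\dots,e^{i\hat\theta_k}$ pairwise distinct. Let $\hat A=(\phi_k(e^{i\hat\theta_1}),\dots,\phi_k(e^{i\hat\theta_k}))\in\mathbb C^{(k+1)\times k}$, $V$ the column space of $\hat A$, $V^\perp$ its (one-dimensional) orthogonal complement in $\mathbb C^{k+1}$, $P_{V^\perp}$ the orthogonal projection onto $V^\perp$, and $v$ a unit vector in $V^\perp$. Then for every $\theta\in\mathbb R$, $$\min_{\hat a\in\mathbb C^k}\|\hat A\hat a-\phi_k(e^{i\theta})\|_2=\|P_{V^\perp}\phi_k(e^{i\theta})\|_2=|v^*\phi_k(e^{i\theta})|\ge\frac{1}{2^k}\prod_{j=1}^k|e^{i\theta}-e^{i\hat\theta_j}|.$$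
   Context: $\phi_s(z)=(1,z,\dots,z^s)^T\in\mathbb C^{s+1}$; $v^*$ is the conjugate transpose of $v$. *)

theory Defs
  imports Complex_Main
begin

text \<open>Vectors of C^(n+1) are represented as functions nat => complex, with only the
  coordinates 0..n relevant (and vectors of C^(n+1) being zero outside {0..n}).\<close>

definition cvecs :: "nat \<Rightarrow> (nat \<Rightarrow> complex) set" where
  "cvecs m = {u. \<forall>i\<ge>m. u i = 0}"

definition phi :: "nat \<Rightarrow> complex \<Rightarrow> nat \<Rightarrow> complex" where
  "phi s z = (\<lambda>i. if i \<le> s then z ^ i else 0)"

definition cinner :: "nat \<Rightarrow> (nat \<Rightarrow> complex) \<Rightarrow> (nat \<Rightarrow> complex) \<Rightarrow> complex" where
  "cinner m u w = (\<Sum>i<m. cnj (u i) * w i)"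

definition vnorm :: "nat \<Rightarrow> (nat \<Rightarrow> complex) \<Rightarrow> real" where
  "vnorm m u = sqrt (\<Sum>i<m. (cmod (u i))\<^sup>2)"

text \<open>The matrix Ahat = (phi_k(e^{i th_1}),...,phi_k(e^{i th_k})) applied to a in C^k
  (columns indexed 0..k-1).\<close>
definition Ahat_mult :: "nat \<Rightarrow> (nat \<Rightarrow> real) \<Rightarrow> (nat \<Rightarrow> complex) \<Rightarrow> nat \<Rightarrow> complex" where
  "Ahat_mult k th a = (\<lambda>i. \<Sum>j<k. phi k (exp (\<i> * complex_of_real (th j))) i * a j)"

definition colspace :: "nat \<Rightarrow> (nat \<Rightarrow> real) \<Rightarrow> (nat \<Rightarrow> complex) set" where
  "colspace k th = Ahat_mult k th ` cvecs k"

definition orth_compl :: "nat \<Rightarrow> (nat \<Rightarrow> complex) set \<Rightarrow> (nat \<Rightarrow> complex) set" where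
  "orth_compl m W = {w \<in> cvecs m. \<forall>u\<in>W. cinner m u w = 0}"

definition orth_proj :: "nat \<Rightarrow> (nat \<Rightarrow> complex) set \<Rightarrow> (nat \<Rightarrow> complex) \<Rightarrow> nat \<Rightarrow> complex" where
  "orth_proj m W x = (THE p. p \<in> W \<and> (\<forall>w\<in>W. cinner m w (\<lambda>i. x i - p i) = 0))"

end

theory Submission
  imports Defs "HOL-Analysis.L2_Norm" "HOL-Computational_Algebra.Polynomial"
begin

text \<open>Write \<open>z\<^sub>j = e^{i\<theta>\<^sub>j}\<close> and \<open>P = \<Prod>\<^sub>j (X - z\<^sub>j) = \<Sum>\<^sub>i c\<^sub>i X\<^sup>i\<close>. A vector \<open>y\<close> lies in the
  column space \<open>V\<close> iff \<open>\<Sum>\<^sub>i c\<^sub>i y\<^sub>i = 0\<close>: necessity because \<open>P(z\<^sub>j) = 0\<close>, sufficiency by Lagrange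
  interpolation in the first \<open>k\<close> rows, the last row being forced by \<open>c\<^sub>k = 1\<close>. So \<open>V\<close> is the
  hyperplane with normal \<open>p = (conj c\<^sub>i)\<^sub>i\<close>, a unit \<open>v \<in> V\<^sup>\<perp>\<close> is \<open>\<beta>p\<close> with \<open>|\<beta>| \<parallel>p\<parallel> = 1\<close>, and
  \<open>v\<^sup>*\<phi>\<^sub>k(w) = conj \<beta> P(w)\<close>. The projection and distance identities are those of any hyperplane
  with unit normal, and \<open>\<parallel>p\<parallel> \<le> \<Sum>\<^sub>i |c\<^sub>i| \<le> \<Prod>\<^sub>j (1 + |z\<^sub>j|) = 2\<^sup>k\<close>.\<close>

section \<open>Inner product and norm on \<open>\<complex>\<^sup>m\<close>\<close>

lemma cnj_cinner: "cnj (cinner m u w) = cinner m w u"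
  unfolding cinner_def by (simp add: mult.commute)

lemma cinner_diff_right: "cinner m u (\<lambda>i. a i - b i) = cinner m u a - cinner m u b"
  unfolding cinner_def by (simp add: algebra_simps sum_subtractf)

lemma cinner_scale_right: "cinner m u (\<lambda>i. c * w i) = c * cinner m u w"
  unfolding cinner_def by (simp add: algebra_simps sum_distrib_left)

lemma cinner_scale_left: "cinner m (\<lambda>i. c * u i) w = cnj c * cinner m u w"
  unfolding cinner_def by (simp add: algebra_simps sum_distrib_left)

lemma vnorm_eq_L2_set: "vnorm m u = L2_set (\<lambda>i. cmod (u i)) {..<m}"
  unfolding vnorm_def L2_set_def ..

lemma vnorm_scale: "vnorm m (\<lambda>i. c * u i) = cmod c * vnorm m u"
  unfolding vnorm_eq_L2_set norm_mult by (simp add: L2_set_right_distrib)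

lemma cinner_self: "cinner m u u = of_real ((vnorm m u)\<^sup>2)"
proof -
  have "cnj (u i) * u i = of_real ((cmod (u i))\<^sup>2)" for i
    by (metis complex_norm_square mult.commute of_real_power)
  then show ?thesis
    unfolding cinner_def vnorm_def by (simp add: sum_nonneg of_real_sum)
qed

lemma cinner_self_eq_0_imp:
  assumes "cinner m u u = 0" "i < m" shows "u i = 0"
proof -
  have "(vnorm m u)\<^sup>2 = 0"
    using assms(1) unfolding cinner_self by (metis of_real_eq_0_iff)
  then have "(\<Sum>i<m. (cmod (u i))\<^sup>2) = 0"
    unfolding vnorm_def by (simp add: sum_nonneg)
  then show ?thesis using assms(2) by (simp add: sum_nonneg_eq_0_iff)
qed

lemma cmod_cinner_le: "cmod (cinner m u w) \<le> vnorm m u * vnorm m w"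
proof -
  have "cmod (cinner m u w) \<le> (\<Sum>i<m. \<bar>cmod (u i)\<bar> * \<bar>cmod (w i)\<bar>)"
    unfolding cinner_def by (rule order_trans[OF norm_sum]) (simp add: norm_mult)
  also have "\<dots> \<le> vnorm m u * vnorm m w"
    unfolding vnorm_eq_L2_set by (rule L2_set_mult_ineq)
  finally show ?thesis .
qed

section \<open>Hyperplanes and orthogonal projection\<close>

lemma orth_proj_orth_compl_eqI:
  assumes p: "p \<in> orth_compl m S"
    and orth: "\<And>w. w \<in> orth_compl m S \<Longrightarrow> cinner m w (\<lambda>i. x i - p i) = 0"
  shows "orth_proj m (orth_compl m S) x = p"
  unfolding orth_proj_def
proof (rule the_equality)
  fix q assume q: "q \<in> orth_compl m S \<and> (\<forall>w\<in>orth_compl m S. cinner m w (\<lambda>i. x i - q i) = 0)"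
  define d where "d i = q i - p i" for i
  have d_eq: "d = (\<lambda>i. (x i - p i) - (x i - q i))"
    unfolding d_def by auto
  have "d \<in> orth_compl m S"
    using p q unfolding d_def orth_compl_def cvecs_def by (auto simp: cinner_diff_right)
  then have "cinner m d d = 0"
    using orth q unfolding d_eq cinner_diff_right by simp
  then have "d i = 0" for i
    using \<open>d \<in> orth_compl m S\<close> cinner_self_eq_0_imp[of m d i]
    unfolding orth_compl_def cvecs_def by (cases "i < m") auto
  then show "q = p" unfolding d_def by auto
qed (use assms in blast)

definition hyperplane :: "nat \<Rightarrow> (nat \<Rightarrow> complex) \<Rightarrow> (nat \<Rightarrow> complex) set" where
  "hyperplane m p = {y \<in> cvecs m. cinner m p y = 0}"

lemma hyperplane_scale:
  assumes "c \<noteq> 0" shows "hyperplane m (\<lambda>i. c * p i) = hyperplane m p"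
  using assms unfolding hyperplane_def cinner_scale_left by simp

lemma scale_in_orth_compl_hyperplane:
  assumes "p \<in> cvecs m" shows "(\<lambda>i. c * p i) \<in> orth_compl m (hyperplane m p)"
proof -
  have "cinner m u (\<lambda>i. c * p i) = 0" if "u \<in> hyperplane m p" for u
    using that unfolding hyperplane_def cinner_scale_right
    by (metis (mono_tags, lifting) cnj_cinner complex_cnj_zero mem_Collect_eq mult_zero_right)
  then show ?thesis using assms unfolding orth_compl_def cvecs_def by auto
qed

lemma orth_compl_hyperplane_imp_scale:
  assumes p: "p \<in> cvecs m" "cinner m p p \<noteq> 0"
    and w: "w \<in> orth_compl m (hyperplane m p)"
  defines "\<beta> \<equiv> cinner m p w / cinner m p p"
  shows "w = (\<lambda>i. \<beta> * p i)"
proof -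
  define y where "y i = w i - \<beta> * p i" for i
  have "cinner m p y = cinner m p w - \<beta> * cinner m p p"
    unfolding y_def[abs_def] cinner_diff_right cinner_scale_right ..
  then have "cinner m p y = 0" using p(2) unfolding \<beta>_def by simp
  moreover have "y \<in> cvecs m"
    using p(1) w unfolding orth_compl_def cvecs_def y_def by simp
  ultimately have "y \<in> hyperplane m p" unfolding hyperplane_def by simp
  then have "cinner m y w = 0" and "cinner m p y = 0"
    using w unfolding orth_compl_def hyperplane_def by auto
  then have "cinner m y p = 0" by (metis cnj_cinner complex_cnj_zero)
  have "cinner m y y = cinner m y w - \<beta> * cinner m y p"
    unfolding y_def[abs_def] cinner_diff_right cinner_scale_right ..
  then have "cinner m y y = 0"
    using \<open>cinner m y w = 0\<close> \<open>cinner m y p = 0\<close> by simp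
  then have "y i = 0" for i
    using p w cinner_self_eq_0_imp[of m y i]
    unfolding y_def orth_compl_def cvecs_def by (cases "i < m") auto
  then show ?thesis unfolding y_def by auto
qed

lemma orth_proj_orth_compl_hyperplane:
  assumes "v \<in> cvecs m" "vnorm m v = 1"
  shows "orth_proj m (orth_compl m (hyperplane m v)) x = (\<lambda>i. cinner m v x * v i)"
proof (rule orth_proj_orth_compl_eqI)
  have vv: "cinner m v v = 1" using assms(2) by (simp add: cinner_self)
  show "(\<lambda>i. cinner m v x * v i) \<in> orth_compl m (hyperplane m v)"
    using assms(1) by (rule scale_in_orth_compl_hyperplane)
  fix w assume "w \<in> orth_compl m (hyperplane m v)"
  then have "w = (\<lambda>i. cinner m v w * v i)"
    using orth_compl_hyperplane_imp_scale[OF assms(1)] vv by fastforce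
  then have "cinner m w (\<lambda>i. x i - cinner m v x * v i)
      = cnj (cinner m v w) * (cinner m v x - cinner m v x * cinner m v v)"
    by (metis cinner_diff_right cinner_scale_left cinner_scale_right)
  then show "cinner m w (\<lambda>i. x i - cinner m v x * v i) = 0"
    using vv by simp
qed

lemma vnorm_orth_proj_orth_compl_hyperplane:
  assumes "v \<in> cvecs m" "vnorm m v = 1"
  shows "vnorm m (orth_proj m (orth_compl m (hyperplane m v)) x) = cmod (cinner m v x)"
  using assms by (simp add: orth_proj_orth_compl_hyperplane vnorm_scale)

lemma cmod_cinner_le_vnorm_diff_hyperplane:
  assumes "vnorm m v = 1" "y \<in> hyperplane m v"
  shows "cmod (cinner m v x) \<le> vnorm m (\<lambda>i. y i - x i)"
proof -
  have "cinner m v (\<lambda>i. y i - x i) = - cinner m v x"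
    using assms(2) unfolding hyperplane_def cinner_diff_right by simp
  then show ?thesis
    using cmod_cinner_le[of m v "\<lambda>i. y i - x i"] assms(1) by (metis norm_minus_cancel mult_1)
qed

lemma nearest_point_hyperplane:
  assumes "x \<in> cvecs m" "v \<in> cvecs m" "vnorm m v = 1"
  shows "\<exists>y\<in>hyperplane m v. vnorm m (\<lambda>i. y i - x i) = cmod (cinner m v x)"
proof
  define y where "y i = x i - cinner m v x * v i" for i
  have "cinner m v v = 1" using assms(3) by (simp add: cinner_self)
  then show "y \<in> hyperplane m v"
    using assms(1,2) unfolding y_def[abs_def] hyperplane_def cvecs_def
    by (simp add: cinner_diff_right cinner_scale_right)
  have "vnorm m (\<lambda>i. y i - x i) = vnorm m (\<lambda>i. - cinner m v x * v i)"
    unfolding y_def by simp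
  then show "vnorm m (\<lambda>i. y i - x i) = cmod (cinner m v x)"
    using assms(3) by (simp only: vnorm_scale norm_minus_cancel mult_1_right)
qed

section \<open>Node polynomial and Lagrange interpolation\<close>

definition node_poly :: "(nat \<Rightarrow> 'a::comm_ring_1) \<Rightarrow> nat \<Rightarrow> 'a poly" where
  "node_poly z k = (\<Prod>j<k. [:- z j, 1:])"

lemma poly_node_poly: "poly (node_poly z k) x = (\<Prod>j<k. x - z j)"
  unfolding node_poly_def by (simp add: poly_prod)

lemma poly_node_poly_node: "j < k \<Longrightarrow> poly (node_poly z k) (z j) = 0"
  unfolding poly_node_poly by (rule prod_zero) auto

lemma degree_node_poly: "degree (node_poly (z :: nat \<Rightarrow> 'a::idom) k) = k"
  unfolding node_poly_def by (subst degree_prod_eq_sum_degree) auto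

lemma coeff_node_poly_degree: "coeff (node_poly (z :: nat \<Rightarrow> 'a::idom) k) k = 1"
  using lead_coeff_prod[of "\<lambda>j. [:- z j, 1:]" "{..<k}"] degree_node_poly[of z k]
  unfolding node_poly_def by simp

lemma node_poly_Suc: "node_poly z (Suc k) = smult (- z k) (node_poly z k) + pCons 0 (node_poly z k)"
  unfolding node_poly_def by (simp add: mult.commute)

lemma sum_cmod_coeff_pCons_0_le:
  "(\<Sum>i\<le>N. cmod (coeff (pCons 0 q) i)) \<le> (\<Sum>i\<le>N. cmod (coeff q i))"
proof (cases N)
  case (Suc n)
  have "(\<Sum>i\<le>n. cmod (coeff q i)) \<le> (\<Sum>i\<le>Suc n. cmod (coeff q i))"
    by (simp add: sum.atMost_Suc)
  then show ?thesis unfolding Suc sum.atMost_Suc_shift by simp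
qed simp

lemma sum_cmod_coeff_node_poly_le:
  "(\<Sum>i\<le>N. cmod (coeff (node_poly z k) i)) \<le> (\<Prod>j<k. 1 + cmod (z j))"
proof (induction k arbitrary: N)
  case 0
  show ?case by (simp add: node_poly_def of_bool_def if_distrib[of cmod] cong: if_cong)
next
  case (Suc k)
  let ?Q = "node_poly z k" and ?B = "\<Prod>j<k. 1 + cmod (z j)"
  have "(\<Sum>i\<le>N. cmod (coeff (node_poly z (Suc k)) i))
      \<le> (\<Sum>i\<le>N. cmod (z k) * cmod (coeff ?Q i) + cmod (coeff (pCons 0 ?Q) i))"
    unfolding node_poly_Suc
    by (rule sum_mono) (metis coeff_add coeff_smult norm_minus_cancel norm_mult norm_triangle_ineq)
  also have "\<dots> = cmod (z k) * (\<Sum>i\<le>N. cmod (coeff ?Q i)) + (\<Sum>i\<le>N. cmod (coeff (pCons 0 ?Q) i))"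
    by (simp add: sum.distrib sum_distrib_left)
  also have "\<dots> \<le> cmod (z k) * ?B + ?B"
    using Suc.IH[of N] sum_cmod_coeff_pCons_0_le[of ?Q N]
    by (intro add_mono mult_left_mono order.trans[OF _ Suc.IH]) auto
  also have "\<dots> = (\<Prod>j<Suc k. 1 + cmod (z j))" by (simp add: algebra_simps)
  finally show ?case .
qed

definition lagrange_basis :: "(nat \<Rightarrow> 'a::field) \<Rightarrow> nat \<Rightarrow> nat \<Rightarrow> 'a poly" where
  "lagrange_basis z k j =
     smult (inverse (\<Prod>l\<in>{..<k}-{j}. z j - z l)) (\<Prod>l\<in>{..<k}-{j}. [:- z l, 1:])"

lemma poly_lagrange_basis:
  assumes "inj_on z {..<k}" "j < k" "m < k"
  shows "poly (lagrange_basis z k j) (z m) = (if m = j then 1 else 0)"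
proof -
  have "(\<Prod>l\<in>{..<k}-{j}. z m - z l) = 0 \<longleftrightarrow> m \<noteq> j"
    using assms unfolding inj_on_def by auto
  then show ?thesis
    unfolding lagrange_basis_def by (auto simp: poly_prod)
qed

lemma degree_lagrange_basis:
  assumes "j < k" shows "degree (lagrange_basis z k j) < k"
proof -
  have "degree (\<Prod>l\<in>{..<k}-{j}. [:- z l, 1:]) \<le> (\<Sum>l\<in>{..<k}-{j}. degree [:- z l, 1:])"
    using degree_prod_sum_le[of "{..<k}-{j}" "\<lambda>l. [:- z l, 1:]"] by (simp add: o_def)
  also have "\<dots> = k - 1" using assms by simp
  finally show ?thesis
    unfolding lagrange_basis_def using assms degree_smult_le le_less_trans by fastforce
qed

lemma lagrange_interpolation:
  assumes "inj_on z {..<k}" "degree q < k"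
  shows "q = (\<Sum>j<k. smult (poly q (z j)) (lagrange_basis z k j))"
proof (rule poly_eqI_degree[where A = "z ` {..<k}"])
  fix x assume "x \<in> z ` {..<k}"
  then obtain m where m: "m < k" "x = z m" by auto
  have "poly (\<Sum>j<k. smult (poly q (z j)) (lagrange_basis z k j)) x
      = (\<Sum>j<k. poly q (z j) * poly (lagrange_basis z k j) (z m))"
    using m by (simp add: poly_sum)
  also have "\<dots> = (\<Sum>j<k. if m = j then poly q (z j) else 0)"
    by (rule sum.cong) (use m assms(1) in \<open>simp_all add: poly_lagrange_basis\<close>)
  finally show "poly q x = poly (\<Sum>j<k. smult (poly q (z j)) (lagrange_basis z k j)) x"
    using m by simp
next
  have card: "card (z ` {..<k}) = k" using assms(1) by (simp add: card_image)
  then show "degree q < card (z ` {..<k})" using assms(2) by simp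
  have "degree (\<Sum>j<k. smult (poly q (z j)) (lagrange_basis z k j)) < k" if "k > 0"
    using that degree_lagrange_basis
    by (intro degree_sum_less) (auto intro: le_less_trans[OF degree_smult_le] simp del: degree_smult_eq)
  then show "degree (\<Sum>j<k. smult (poly q (z j)) (lagrange_basis z k j)) < card (z ` {..<k})"
    using card assms(2) by (cases "k = 0") auto
qed

lemma vandermonde_solvable:
  fixes z :: "nat \<Rightarrow> 'a::field"
  assumes "inj_on z {..<k}"
  shows "\<exists>a. \<forall>m<k. (\<Sum>j<k. z j ^ m * a j) = y m"
proof -
  let ?L = "lagrange_basis z k"
  define a where "a j = (\<Sum>i<k. coeff (?L j) i * y i)" for j
  have dual: "(\<Sum>j<k. z j ^ m * coeff (?L j) i) = (if i = m then 1 else 0)" if "m < k" for m i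
  proof -
    have "monom 1 m = (\<Sum>j<k. smult (z j ^ m) (?L j))"
      using lagrange_interpolation[OF assms, of "monom 1 m"] that
      by (simp add: degree_monom_eq poly_monom)
    from arg_cong[OF this, of "\<lambda>p. coeff p i"] show ?thesis
      by (auto simp: coeff_sum coeff_monom)
  qed
  have "(\<Sum>j<k. z j ^ m * a j) = y m" if "m < k" for m
  proof -
    have "(\<Sum>j<k. z j ^ m * a j) = (\<Sum>i<k. y i * (\<Sum>j<k. z j ^ m * coeff (?L j) i))"
      unfolding a_def sum_distrib_left by (subst sum.swap) (simp add: mult_ac)
    also have "\<dots> = (\<Sum>i<k. if i = m then y i else 0)"
      by (rule sum.cong) (simp_all add: dual that)
    finally show ?thesis using that by simp
  qed
  then show ?thesis by blast
qed

lemma node_poly_annihilates_power_sums: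
  fixes z :: "nat \<Rightarrow> 'a::idom"
  shows "(\<Sum>i\<le>k. coeff (node_poly z k) i * (\<Sum>j<k. z j ^ i * a j)) = 0"
proof -
  have "(\<Sum>i\<le>k. coeff (node_poly z k) i * (\<Sum>j<k. z j ^ i * a j))
      = (\<Sum>j<k. a j * poly (node_poly z k) (z j))"
    unfolding poly_altdef degree_node_poly sum_distrib_left
    by (subst sum.swap) (simp add: mult_ac)
  also have "\<dots> = 0" by (simp add: poly_node_poly_node)
  finally show ?thesis .
qed

section \<open>The column space as a hyperplane\<close>

definition conj_coeff_vec :: "nat \<Rightarrow> complex poly \<Rightarrow> nat \<Rightarrow> complex" where
  "conj_coeff_vec n q = (\<lambda>i. if i \<le> n then cnj (coeff q i) else 0)"

lemma conj_coeff_vec_in_cvecs: "conj_coeff_vec n q \<in> cvecs (n+1)"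
  unfolding conj_coeff_vec_def cvecs_def by simp

lemma cinner_conj_coeff_vec: "cinner (n+1) (conj_coeff_vec n q) y = (\<Sum>i\<le>n. coeff q i * y i)"
  unfolding cinner_def conj_coeff_vec_def lessThan_Suc_atMost[symmetric] by simp

lemma cinner_conj_coeff_vec_phi:
  assumes "degree q \<le> n"
  shows "cinner (n+1) (conj_coeff_vec n q) (phi n x) = poly q x"
proof -
  have "poly q x = poly (\<Sum>i\<le>n. monom (coeff q i) i) x"
    by (simp only: poly_as_sum_of_monoms'[OF assms])
  then show ?thesis unfolding cinner_conj_coeff_vec phi_def by (simp add: poly_sum poly_monom)
qed

lemma vnorm_conj_coeff_vec_le: "vnorm (n+1) (conj_coeff_vec n q) \<le> (\<Sum>i\<le>n. cmod (coeff q i))"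
proof -
  have "vnorm (n+1) (conj_coeff_vec n q) = L2_set (\<lambda>i. cmod (coeff q i)) {..n}"
    unfolding vnorm_eq_L2_set conj_coeff_vec_def lessThan_Suc_atMost[symmetric]
    by (rule L2_set_cong) auto
  then show ?thesis by (simp add: L2_set_le_sum)
qed

lemma vnorm_conj_coeff_vec_ge:
  assumes "coeff q n = 1" shows "1 \<le> vnorm (n+1) (conj_coeff_vec n q)"
proof -
  have "1 \<le> (\<Sum>i<n+1. (cmod (conj_coeff_vec n q i))\<^sup>2)"
    using member_le_sum[of n "{..<n+1}" "\<lambda>i. (cmod (conj_coeff_vec n q i))\<^sup>2"] assms
    by (simp add: conj_coeff_vec_def)
  then show ?thesis unfolding vnorm_def by simp
qed

lemma Ahat_mult_eq:
  "Ahat_mult k th a i =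
     (if i \<le> k then \<Sum>j<k. exp (\<i> * complex_of_real (th j)) ^ i * a j else 0)"
  unfolding Ahat_mult_def phi_def by simp

lemma colspace_eq_hyperplane:
  fixes k :: nat and th :: "nat \<Rightarrow> real"
  defines "z \<equiv> \<lambda>j. exp (\<i> * complex_of_real (th j))"
  assumes inj: "inj_on z {..<k}"
  shows "colspace k th = hyperplane (k+1) (conj_coeff_vec k (node_poly z k))"
proof (intro equalityI subsetI)
  fix y assume "y \<in> colspace k th"
  then obtain a where "y = Ahat_mult k th a" unfolding colspace_def by blast
  then show "y \<in> hyperplane (k+1) (conj_coeff_vec k (node_poly z k))"
    using node_poly_annihilates_power_sums[of z k a]
    unfolding hyperplane_def cinner_conj_coeff_vec cvecs_def Ahat_mult_eq z_def by simp
next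
  fix y assume y: "y \<in> hyperplane (k+1) (conj_coeff_vec k (node_poly z k))"
  obtain a0 where a0: "\<forall>m<k. (\<Sum>j<k. z j ^ m * a0 j) = y m"
    using vandermonde_solvable[OF inj] by blast
  define a where "a j = (if j < k then a0 j else 0)" for j
  define s where "s m = (\<Sum>j<k. z j ^ m * a j)" for m
  have low: "s m = y m" if "m < k" for m
    using a0 that unfolding s_def a_def by simp
  let ?c = "coeff (node_poly z k)"
  have "(\<Sum>i\<le>k. ?c i * s i) = 0" "(\<Sum>i\<le>k. ?c i * y i) = 0"
    using node_poly_annihilates_power_sums[of z k a] y
    unfolding s_def hyperplane_def cinner_conj_coeff_vec by auto
  then have "(\<Sum>i<k. ?c i * y i) + s k = (\<Sum>i<k. ?c i * y i) + y k"
    using low coeff_node_poly_degree[of z k] by (simp add: lessThan_Suc_atMost[symmetric])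
  then have "s k = y k" by simp
  have "Ahat_mult k th a i = y i" for i
  proof (cases "i \<le> k")
    case True
    then have "Ahat_mult k th a i = s i" unfolding Ahat_mult_eq s_def z_def by simp
    also have "s i = y i" using True low \<open>s k = y k\<close> by (cases "i = k") auto
    finally show ?thesis .
  next
    case False
    then show ?thesis using y unfolding Ahat_mult_eq hyperplane_def cvecs_def by auto
  qed
  then have "Ahat_mult k th a = y" by auto
  moreover have "a \<in> cvecs k" unfolding a_def cvecs_def by simp
  ultimately show "y \<in> colspace k th" unfolding colspace_def by blast
qed

lemma vnorm_conj_coeff_vec_node_poly_le:
  assumes "\<forall>j<k. cmod (z j) = 1"
  shows "vnorm (k+1) (conj_coeff_vec k (node_poly z k)) \<le> 2 ^ k"
proof -
  have "vnorm (k+1) (conj_coeff_vec k (node_poly z k)) \<le> (\<Prod>j<k. 1 + cmod (z j))"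
    using vnorm_conj_coeff_vec_le sum_cmod_coeff_node_poly_le by (rule order.trans)
  also have "\<dots> = 2 ^ k" using assms by simp
  finally show ?thesis .
qed

lemma cmod_cinner_node_poly_normal_phi_ge:
  fixes z :: "nat \<Rightarrow> complex" and k :: nat
  defines "p \<equiv> conj_coeff_vec k (node_poly z k)"
  assumes "\<forall>j<k. cmod (z j) = 1" "cmod \<beta> * vnorm (k+1) p = 1"
  shows "(1 / 2 ^ k) * (\<Prod>j<k. cmod (w - z j)) \<le> cmod (cinner (k+1) (\<lambda>i. \<beta> * p i) (phi k w))"
proof -
  have p_ge: "1 \<le> vnorm (k+1) p"
    unfolding p_def by (rule vnorm_conj_coeff_vec_ge) (rule coeff_node_poly_degree)
  have "(1 / 2 ^ k) * (\<Prod>j<k. cmod (w - z j)) \<le> (\<Prod>j<k. cmod (w - z j)) / vnorm (k+1) p"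
    using p_ge vnorm_conj_coeff_vec_node_poly_le[OF assms(2)]
    by (simp add: p_def divide_left_mono prod_nonneg)
  also have "cinner (k+1) p (phi k w) = poly (node_poly z k) w"
    unfolding p_def by (rule cinner_conj_coeff_vec_phi) (simp add: degree_node_poly)
  then have "(\<Prod>j<k. cmod (w - z j)) / vnorm (k+1) p = cmod (cinner (k+1) (\<lambda>i. \<beta> * p i) (phi k w))"
    using assms(3) p_ge unfolding cinner_scale_left
    by (simp add: poly_node_poly norm_mult prod_norm field_simps)
  finally show ?thesis .
qed

lemma unit_vector_orth_compl_hyperplane:
  assumes "p \<in> cvecs m" "1 \<le> vnorm m p"
    and "v \<in> orth_compl m (hyperplane m p)" "vnorm m v = 1"
  obtains \<beta> where "v = (\<lambda>i. \<beta> * p i)" "cmod \<beta> * vnorm m p = 1"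
    and "hyperplane m v = hyperplane m p"
proof -
  have "cinner m p p \<noteq> 0" using assms(2) by (simp add: cinner_self)
  then obtain \<beta> where v: "v = (\<lambda>i. \<beta> * p i)"
    using orth_compl_hyperplane_imp_scale assms(1,3) by blast
  then have "cmod \<beta> * vnorm m p = 1" using assms(4) by (simp add: vnorm_scale)
  then have "\<beta> \<noteq> 0" by auto
  then show ?thesis using that v \<open>cmod \<beta> * vnorm m p = 1\<close> hyperplane_scale by blast
qed

theorem theorem3p1:
  fixes k :: nat and th :: "nat \<Rightarrow> real" and v :: "nat \<Rightarrow> complex" and \<theta> :: real
  assumes "k \<ge> 1"
    and "inj_on (\<lambda>j. exp (\<i> * complex_of_real (th j))) {..<k}"
    and "v \<in> orth_compl (k+1) (colspace k th)"
    and "vnorm (k+1) v = 1"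
  shows "(\<exists>a\<in>cvecs k. vnorm (k+1) (\<lambda>i. Ahat_mult k th a i - phi k (exp (\<i> * \<theta>)) i)
            = vnorm (k+1) (orth_proj (k+1) (orth_compl (k+1) (colspace k th)) (phi k (exp (\<i> * \<theta>)))))
       \<and> (\<forall>a\<in>cvecs k. vnorm (k+1) (orth_proj (k+1) (orth_compl (k+1) (colspace k th)) (phi k (exp (\<i> * \<theta>))))
            \<le> vnorm (k+1) (\<lambda>i. Ahat_mult k th a i - phi k (exp (\<i> * \<theta>)) i))
       \<and> vnorm (k+1) (orth_proj (k+1) (orth_compl (k+1) (colspace k th)) (phi k (exp (\<i> * \<theta>))))
            = cmod (cinner (k+1) v (phi k (exp (\<i> * \<theta>))))
       \<and> cmod (cinner (k+1) v (phi k (exp (\<i> * \<theta>))))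
            \<ge> (1 / 2 ^ k) * (\<Prod>j<k. cmod (exp (\<i> * \<theta>) - exp (\<i> * complex_of_real (th j))))"
proof -
  define z where "z j = exp (\<i> * complex_of_real (th j))" for j
  define w where "w = exp (\<i> * complex_of_real \<theta>)"
  define p where "p = conj_coeff_vec k (node_poly z k)"
  have V: "colspace k th = hyperplane (k+1) p"
    unfolding p_def z_def by (rule colspace_eq_hyperplane) (use assms(2) in simp)
  have "1 \<le> vnorm (k+1) p"
    unfolding p_def by (rule vnorm_conj_coeff_vec_ge) (rule coeff_node_poly_degree)
  then obtain \<beta> where v: "v = (\<lambda>i. \<beta> * p i)" and \<beta>: "cmod \<beta> * vnorm (k+1) p = 1"
    and Vv: "colspace k th = hyperplane (k+1) v"
    using unit_vector_orth_compl_hyperplane assms(3,4) conj_coeff_vec_in_cvecs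
    unfolding V p_def by metis
  have v_cvecs: "v \<in> cvecs (k+1)" using assms(3) unfolding orth_compl_def by simp
  have x_cvecs: "phi k w \<in> cvecs (k+1)" unfolding phi_def cvecs_def by simp
  have "\<forall>j<k. cmod (z j) = 1" unfolding z_def by simp
  then have bound: "(1 / 2 ^ k) * (\<Prod>j<k. cmod (w - z j)) \<le> cmod (cinner (k+1) v (phi k w))"
    using \<beta> unfolding v p_def by (rule cmod_cinner_node_poly_normal_phi_ge)
  obtain y where "y \<in> colspace k th"
    "vnorm (k+1) (\<lambda>i. y i - phi k w i) = cmod (cinner (k+1) v (phi k w))"
    using nearest_point_hyperplane[OF x_cvecs v_cvecs assms(4)] unfolding Vv by blast
  then obtain a where "a \<in> cvecs k"
    "vnorm (k+1) (\<lambda>i. Ahat_mult k th a i - phi k w i) = cmod (cinner (k+1) v (phi k w))"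
    unfolding colspace_def by blast
  moreover have "cmod (cinner (k+1) v (phi k w)) \<le> vnorm (k+1) (\<lambda>i. Ahat_mult k th a i - phi k w i)"
    if "a \<in> cvecs k" for a
    using cmod_cinner_le_vnorm_diff_hyperplane[OF assms(4)] that
    unfolding Vv[symmetric] colspace_def by blast
  ultimately show ?thesis
    using bound vnorm_orth_proj_orth_compl_hyperplane[OF v_cvecs assms(4)]
    unfolding Vv[symmetric] w_def z_def by auto
qed

end
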